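(* Let $Q\ge1$ be an integer, let $h$ be a conditionally negative definite kernel on $\mathcal{X}=\mathbb{R}^N$ and let $\alpha\in(\mathbb{R}_+)^Q$ be fixed. Let $\eta$ be a signed measure of finite total variation on $\mathcal{X}$ belonging to $\mathcal{M}\mathcal{A}^h$. Suppose that $h$ is continuous on $\mathcal{X}\times\mathcal{X}$ and that $h$ is measure coercive. Then the minimization problem $\inf_{X=(x_q)_{q=1}^Q\in\mathcal{X}^Q} d(\delta_{\alpha,X},\eta)^2$ admits at least one solution $X^\star\in\mathcal{X}^Q$.
   Context: $h:\mathcal{X}\times\mathcal{X}\to\mathbb{R}$ is symmetric, $h(x,x)=0$, and conditionally negative definite: $\sum_{j_1,j_2}\alpha_{j_1}\alpha_{j_2}h(x_{j_1},x_{j_2})\le0$ whenever $\sum_j\alpha_j=0$. Put $k(x,y)=\frac{h(x,0)+h(y,0)-h(x,y)}{2}$, a positive definite kernel; $\mathcal{M}\mathcal{A}^h$ is the reproducing kernel Hilbert space of $k$, and a measure $\eta$ is said to belong to it when $\int\sqrt{k(x,x)}|\eta|(dx)<\infty$ so that its embedding $\int k(x,\cdot)\eta(dx)$ lies in this space. The distance is $d(\mu,\nu)^2=\int\int k(x,y)(\mu-\nu)(dx)(\mu-\nu)(dy)$, which is the RKHS norm of the difference of the embeddings; in particular $d(\delta_x,\delta_y)^2=h(x,y)$. For $X=(x_q)\in\mathcal{X}^Q$, $\delta_{\alpha,X}=\sum_q\alpha_q\delta_{x_q}$. With $\mathcal{P}_J=\{\beta\in\mathbb{R}^J:\beta_j\ge0,\sum\beta_j=1\}$,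 $h$ is measure coercive if for every $J\ge1$ and $\beta\in\mathcal{P}_J$, $\lim_{\|X\|\to\infty}d(\delta_{\beta,X},\delta_0)=\infty$ for $X\in\mathcal{X}^J$. *)

theory Defs
  imports "HOL-Analysis.Analysis"
begin

definition cnd_kernel :: "('a \<Rightarrow> 'a \<Rightarrow> real) \<Rightarrow> bool" where
  "cnd_kernel h \<longleftrightarrow>
     (\<forall>x y. h x y = h y x) \<and> (\<forall>x. h x x = 0) \<and>
     (\<forall>(J::nat) (a::nat \<Rightarrow> real) (xs::nat \<Rightarrow> 'a).
        (\<Sum>j<J. a j) = 0 \<longrightarrow> (\<Sum>j1<J. \<Sum>j2<J. a j1 * a j2 * h (xs j1) (xs j2)) \<le> 0)"

definition kernel_k :: "('a::zero \<Rightarrow> 'a \<Rightarrow> real) \<Rightarrow> 'a \<Rightarrow> 'a \<Rightarrow> real" where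
  "kernel_k h x y = (h x 0 + h y 0 - h x y) / 2"

text \<open>A finite signed measure is represented by a pair (P, N) of finite Borel measures,
  standing for P - N. Its integration functional:\<close>
definition signed_int :: "'a measure \<times> 'a measure \<Rightarrow> ('a \<Rightarrow> real) \<Rightarrow> real" where
  "signed_int \<eta> f = integral\<^sup>L (fst \<eta>) f - integral\<^sup>L (snd \<eta>) f"

definition finite_signed_borel :: "('a::topological_space) measure \<times> 'a measure \<Rightarrow> bool" where
  "finite_signed_borel \<eta> \<longleftrightarrow>
     sets (fst \<eta>) = sets borel \<and> sets (snd \<eta>) = sets borel \<and>
     finite_measure (fst \<eta>) \<and> finite_measure (snd \<eta>)"

text \<open>Membership in MA^h: integral of sqrt(k(x,x)) against |eta| is finite
  (checked against both parts P and N of the representation).\<close>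
definition in_MA :: "('a::{zero,topological_space} \<Rightarrow> 'a \<Rightarrow> real) \<Rightarrow> 'a measure \<times> 'a measure \<Rightarrow> bool" where
  "in_MA h \<eta> \<longleftrightarrow>
     (\<integral>\<^sup>+ x. ennreal (sqrt (kernel_k h x x)) \<partial>(fst \<eta>)) < \<infinity> \<and>
     (\<integral>\<^sup>+ x. ennreal (sqrt (kernel_k h x x)) \<partial>(snd \<eta>)) < \<infinity>"

text \<open>Integration against delta_{alpha,X} = sum_{q<Q} alpha_q delta_{x_q}.\<close>
definition dirac_int :: "nat \<Rightarrow> (nat \<Rightarrow> real) \<Rightarrow> (nat \<Rightarrow> 'a) \<Rightarrow> ('a \<Rightarrow> real) \<Rightarrow> real" where
  "dirac_int Q \<alpha> X f = (\<Sum>q<Q. \<alpha> q * f (X q))"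

text \<open>Squared kernel distance: double integral of k against (mu - nu) x (mu - nu),
  where I is the integration functional of the signed measure mu - nu.\<close>
definition kdist2 :: "('a \<Rightarrow> 'a \<Rightarrow> real) \<Rightarrow> (('a \<Rightarrow> real) \<Rightarrow> real) \<Rightarrow> real" where
  "kdist2 k I = I (\<lambda>x. I (\<lambda>y. k x y))"

definition obj :: "('a::zero \<Rightarrow> 'a \<Rightarrow> real) \<Rightarrow> nat \<Rightarrow> (nat \<Rightarrow> real) \<Rightarrow> 'a measure \<times> 'a measure
                   \<Rightarrow> (nat \<Rightarrow> 'a) \<Rightarrow> real" where
  "obj h Q \<alpha> \<eta> X = kdist2 (kernel_k h) (\<lambda>f. dirac_int Q \<alpha> X f - signed_int \<eta> f)"

definition measure_coercive :: "('a::real_normed_vector \<Rightarrow> 'a \<Rightarrow> real) \<Rightarrow> bool" where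
  "measure_coercive h \<longleftrightarrow>
     (\<forall>(J::nat) (\<beta>::nat \<Rightarrow> real). J \<ge> 1 \<and> (\<forall>j<J. \<beta> j > 0) \<and> (\<Sum>j<J. \<beta> j) = 1 \<longrightarrow>
        (\<forall>M::real. \<exists>R::real. \<forall>X::nat \<Rightarrow> 'a. (\<exists>j<J. norm (X j) \<ge> R) \<longrightarrow>
            sqrt (kdist2 (kernel_k h) (\<lambda>f. dirac_int J \<beta> X f - f 0)) \<ge> M))"

end

theory Submission
  imports Defs
begin

text \<open>Write \<open>A(X) = d(\<delta>\<^sub>\<alpha>\<^sub>,\<^sub>X, \<delta>\<^sub>0)\<^sup>2\<close> for the Gram form of the kernel \<open>k\<close> at the
  points \<open>X\<close> and \<open>g(x) = \<integral> k(x, y) \<eta>(dy)\<close> for the potential of \<open>\<eta>\<close>. Expanding the square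
  gives \<open>d(\<delta>\<^sub>\<alpha>\<^sub>,\<^sub>X, \<eta>)\<^sup>2 = A(X) - 2 \<Sum>\<^sub>q \<alpha>\<^sub>q g(x\<^sub>q) + c\<close> with \<open>c = d(\<delta>\<^sub>0, \<eta>)\<^sup>2\<close>, and the
  Cauchy-Schwarz inequality for the positive definite kernel \<open>k\<close> bounds the middle term by
  \<open>2 C \<surd>A(X)\<close>, where \<open>C = \<integral> \<surd>k(y,y) (P + N)(dy)\<close> for \<open>\<eta> = P - N\<close>. After normalising
  the positive weights to a probability vector, measure coercivity makes \<open>\<surd>A(X) \<ge> 2C\<close> as
  soon as a point carrying positive weight leaves a large ball, and then the objective is at
  least its value \<open>c\<close> at \<open>X = 0\<close>. Hence the infimum may be taken over a product of closed
  balls, which is compact, and the objective is continuous since \<open>h\<close> is continuous and \<open>g\<close>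
  is continuous by dominated convergence.\<close>

definition gram_form :: "('a \<Rightarrow> 'a \<Rightarrow> real) \<Rightarrow> nat \<Rightarrow> (nat \<Rightarrow> real) \<Rightarrow> (nat \<Rightarrow> 'a) \<Rightarrow> real" where
  "gram_form k Q \<alpha> X = (\<Sum>q<Q. \<Sum>r<Q. \<alpha> q * \<alpha> r * k (X q) (X r))"

definition kernel_norm :: "('a::zero \<Rightarrow> 'a \<Rightarrow> real) \<Rightarrow> 'a \<Rightarrow> real" where
  "kernel_norm h x = sqrt (kernel_k h x x)"

lemma cnd_kernel_sym: "cnd_kernel h \<Longrightarrow> h x y = h y x"
  unfolding cnd_kernel_def by blast

lemma cnd_kernel_diag: "cnd_kernel h \<Longrightarrow> h x x = 0"
  unfolding cnd_kernel_def by blast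

lemma cnd_kernel_quadratic_nonpos:
  fixes a :: "nat \<Rightarrow> real"
  assumes "cnd_kernel h" and "(\<Sum>j<J. a j) = 0"
  shows "(\<Sum>i<J. \<Sum>j<J. a i * a j * h (x i) (x j)) \<le> 0"
  using assms unfolding cnd_kernel_def by blast

lemma kernel_k_sym: "cnd_kernel h \<Longrightarrow> kernel_k h x y = kernel_k h y x"
  unfolding kernel_k_def by (simp add: cnd_kernel_sym[of h x y])

lemma kernel_k_zero_right: "cnd_kernel h \<Longrightarrow> kernel_k h x 0 = 0"
  unfolding kernel_k_def by (simp add: cnd_kernel_diag)

lemma kernel_k_zero_left: "cnd_kernel h \<Longrightarrow> kernel_k h 0 y = 0"
  unfolding kernel_k_def by (simp add: cnd_kernel_diag cnd_kernel_sym[of h 0 y])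

text \<open>Positive definiteness of \<open>k\<close> is conditional negativity of \<open>h\<close> for the family \<open>x\<close>
  extended by the point \<open>0\<close> with weight \<open>-\<Sum>a\<close>.\<close>
lemma gram_form_kernel_k_nonneg:
  fixes h :: "'a::zero \<Rightarrow> 'a \<Rightarrow> real"
  assumes h: "cnd_kernel h"
  shows "0 \<le> gram_form (kernel_k h) J a x"
proof -
  define \<sigma> where "\<sigma> = (\<Sum>j<J. a j)"
  define H where "H = (\<Sum>i<J. a i * h (x i) 0)"
  define D where "D = (\<Sum>i<J. \<Sum>j<J. a i * a j * h (x i) (x j))"
  define a' where "a' j = (if j < J then a j else - \<sigma>)" for j
  define x' where "x' j = (if j < J then x j else 0)" for j
  have "(\<Sum>j<Suc J. a' j) = 0"
    by (simp add: a'_def \<sigma>_def)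
  then have extended: "(\<Sum>i<Suc J. \<Sum>j<Suc J. a' i * a' j * h (x' i) (x' j)) \<le> 0"
    by (rule cnd_kernel_quadratic_nonpos[OF h])
  have row: "(\<Sum>i<J. a i * \<sigma> * h (x i) 0) = \<sigma> * H"
    unfolding H_def sum_distrib_left by (rule sum.cong) auto
  have column: "(\<Sum>j<J. - \<sigma> * a j * h 0 (x j)) = - \<sigma> * H"
    unfolding H_def sum_distrib_left by (rule sum.cong) (auto simp: cnd_kernel_sym[OF h, of 0])
  have "(\<Sum>i<Suc J. \<Sum>j<Suc J. a' i * a' j * h (x' i) (x' j))
      = (\<Sum>i<J. (\<Sum>j<J. a i * a j * h (x i) (x j)) - a i * \<sigma> * h (x i) 0)
        + ((\<Sum>j<J. - \<sigma> * a j * h 0 (x j)) + \<sigma> * \<sigma> * h 0 0)"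
    by (simp add: a'_def x'_def)
  also have "\<dots> = D - 2 * \<sigma> * H"
    unfolding column sum_subtractf row D_def by (simp add: cnd_kernel_diag[OF h])
  finally have D_le: "D \<le> 2 * \<sigma> * H"
    using extended by simp
  have row_sum: "(\<Sum>i<J. \<Sum>j<J. a i * a j * h (x i) 0) = H * \<sigma>"
    unfolding H_def \<sigma>_def sum_product by (intro sum.cong) (auto simp: mult_ac)
  have column_sum: "(\<Sum>i<J. \<Sum>j<J. a i * a j * h (x j) 0) = \<sigma> * H"
    unfolding H_def \<sigma>_def sum_product by (intro sum.cong) (auto simp: mult_ac)
  have "gram_form (kernel_k h) J a x
      = (\<Sum>i<J. \<Sum>j<J. (a i * a j * h (x i) 0 + a i * a j * h (x j) 0
          - a i * a j * h (x i) (x j)) / 2)"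
    unfolding gram_form_def kernel_k_def by (intro sum.cong) (auto simp: algebra_simps)
  also have "\<dots> = (H * \<sigma> + \<sigma> * H - D) / 2"
    unfolding sum_divide_distrib[symmetric] sum_subtractf sum.distrib row_sum column_sum D_def ..
  finally have "gram_form (kernel_k h) J a x = (H * \<sigma> + \<sigma> * H - D) / 2" .
  then show ?thesis
    using D_le by (simp add: mult.commute[of H \<sigma>])
qed

lemma kernel_k_diag_nonneg:
  assumes "cnd_kernel h"
  shows "0 \<le> kernel_k h y y"
proof -
  have "0 \<le> gram_form (kernel_k h) 1 (\<lambda>_. 1) (\<lambda>_. y)"
    by (rule gram_form_kernel_k_nonneg[OF assms])
  then show ?thesis
    by (simp add: gram_form_def)
qed

lemma kernel_norm_nonneg: "cnd_kernel h \<Longrightarrow> 0 \<le> kernel_norm h y"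
  unfolding kernel_norm_def by (simp add: kernel_k_diag_nonneg)

lemma abs_le_sqrt_mult_sqrt_if_quadratic_nonneg:
  fixes a b c :: real
  assumes a: "0 \<le> a" and c: "0 \<le> c" and quadratic: "\<And>t. 0 \<le> t\<^sup>2 * a - 2 * t * b + c"
  shows "\<bar>b\<bar> \<le> sqrt a * sqrt c"
proof (cases "a = 0")
  case True
  have "b = 0"
  proof (rule ccontr)
    assume "b \<noteq> 0"
    with True quadratic[of "(c + 1) / (2 * b)"] show False
      by simp
  qed
  then show ?thesis
    using a c by simp
next
  case False
  with a have "0 < a"
    by simp
  moreover have "0 \<le> (b / a)\<^sup>2 * a - 2 * (b / a) * b + c"
    by (rule quadratic)
  ultimately have "b\<^sup>2 \<le> a * c"
    by (simp add: field_simps power2_eq_square)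
  then have "sqrt (b\<^sup>2) \<le> sqrt (a * c)"
    by (rule real_sqrt_le_mono)
  then show ?thesis
    by (simp add: real_sqrt_mult)
qed

text \<open>The Gram form of the points \<open>X, y\<close> with weights \<open>t\<alpha>, -1\<close> is a nonnegative
  quadratic polynomial in \<open>t\<close>.\<close>
lemma kernel_k_cauchy_schwarz:
  fixes h :: "'a::zero \<Rightarrow> 'a \<Rightarrow> real"
  assumes h: "cnd_kernel h"
  shows "\<bar>\<Sum>q<Q. \<alpha> q * kernel_k h (X q) y\<bar>
    \<le> sqrt (gram_form (kernel_k h) Q \<alpha> X) * kernel_norm h y"
  unfolding kernel_norm_def
proof (rule abs_le_sqrt_mult_sqrt_if_quadratic_nonneg)
  show "0 \<le> gram_form (kernel_k h) Q \<alpha> X" "0 \<le> kernel_k h y y"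
    using h by (rule gram_form_kernel_k_nonneg, rule kernel_k_diag_nonneg)
  fix t :: real
  define a where "a j = (if j < Q then t * \<alpha> j else -1)" for j
  define x where "x j = (if j < Q then X j else y)" for j
  have "(\<Sum>i<Q. \<Sum>j<Q. a i * a j * kernel_k h (x i) (x j)) = t\<^sup>2 * gram_form (kernel_k h) Q \<alpha> X"
    unfolding gram_form_def sum_distrib_left
    by (intro sum.cong) (auto simp: a_def x_def power2_eq_square mult_ac)
  moreover have "(\<Sum>i<Q. a i * a Q * kernel_k h (x i) (x Q)) = - t * (\<Sum>q<Q. \<alpha> q * kernel_k h (X q) y)"
    "(\<Sum>j<Q. a Q * a j * kernel_k h (x Q) (x j)) = - t * (\<Sum>q<Q. \<alpha> q * kernel_k h (X q) y)"
    unfolding sum_distrib_left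
    by (auto intro!: sum.cong simp: a_def x_def mult_ac kernel_k_sym[OF h, of y])
  moreover have "gram_form (kernel_k h) (Suc Q) a x
      = (\<Sum>i<Q. \<Sum>j<Q. a i * a j * kernel_k h (x i) (x j))
        + (\<Sum>i<Q. a i * a Q * kernel_k h (x i) (x Q))
        + ((\<Sum>j<Q. a Q * a j * kernel_k h (x Q) (x j)) + a Q * a Q * kernel_k h (x Q) (x Q))"
    by (simp add: gram_form_def sum.distrib)
  ultimately have "gram_form (kernel_k h) (Suc Q) a x = t\<^sup>2 * gram_form (kernel_k h) Q \<alpha> X
      - 2 * t * (\<Sum>q<Q. \<alpha> q * kernel_k h (X q) y) + kernel_k h y y"
    by (simp add: a_def x_def)
  moreover have "0 \<le> gram_form (kernel_k h) (Suc Q) a x"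
    using h by (rule gram_form_kernel_k_nonneg)
  ultimately show "0 \<le> t\<^sup>2 * gram_form (kernel_k h) Q \<alpha> X
      - 2 * t * (\<Sum>q<Q. \<alpha> q * kernel_k h (X q) y) + kernel_k h y y"
    by simp
qed

lemma kernel_k_abs_le: "cnd_kernel h \<Longrightarrow> \<bar>kernel_k h x y\<bar> \<le> kernel_norm h x * kernel_norm h y"
  using kernel_k_cauchy_schwarz[where Q=1 and \<alpha>="\<lambda>_. 1" and X="\<lambda>_. x"]
  by (simp add: gram_form_def kernel_norm_def)

lemma continuous_on_kernel_k:
  assumes "continuous_on UNIV (\<lambda>(x, y). h x y)"
    and "continuous_on S f" and "continuous_on S g"
  shows "continuous_on S (\<lambda>z. kernel_k h (f z) (g z))"
proof -
  have h_comp: "continuous_on S (\<lambda>z. h (f z) (g z))"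
    if "continuous_on S f" "continuous_on S g" for f g
    using continuous_on_compose2[OF assms(1) continuous_on_Pair[OF that]] by auto
  have "continuous_on S (\<lambda>z. h (f z) (g z))" "continuous_on S (\<lambda>z. h (f z) 0)"
    "continuous_on S (\<lambda>z. h (g z) 0)"
    using assms(2,3) continuous_on_const by (auto intro: h_comp)
  then show ?thesis
    unfolding kernel_k_def by (intro continuous_intros) simp_all
qed

lemma continuous_on_kernel_norm:
  "continuous_on UNIV (\<lambda>(x, y). h x y) \<Longrightarrow> continuous_on UNIV (kernel_norm h)"
  unfolding kernel_norm_def
  by (intro continuous_intros continuous_on_kernel_k[OF _ continuous_on_id continuous_on_id])

lemma sum_reindex_support:
  fixes \<phi> :: "nat \<Rightarrow> 'b::comm_monoid_add"
  assumes e: "bij_betw e {..<J} S" and S: "S \<subseteq> {..<Q}"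
    and zero: "\<And>q. q < Q \<Longrightarrow> q \<notin> S \<Longrightarrow> \<phi> q = 0"
  shows "(\<Sum>j<J. \<phi> (e j)) = (\<Sum>q<Q. \<phi> q)"
proof -
  have "(\<Sum>j<J. \<phi> (e j)) = (\<Sum>q\<in>S. \<phi> q)"
    using sum.reindex_bij_betw[OF e] by simp
  also have "\<dots> = (\<Sum>q<Q. \<phi> q)"
    by (rule sum.mono_neutral_left) (use S zero in auto)
  finally show ?thesis .
qed

lemma gram_form_reindex_support:
  assumes "bij_betw e {..<J} S" and "S \<subseteq> {..<Q}"
    and "\<And>q. q < Q \<Longrightarrow> q \<notin> S \<Longrightarrow> \<alpha> q = 0"
  shows "gram_form k J (\<lambda>j. \<alpha> (e j)) (\<lambda>j. X (e j)) = gram_form k Q \<alpha> X"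
proof -
  have inner: "(\<Sum>j<J. \<alpha> q * \<alpha> (e j) * k (X q) (X (e j))) = (\<Sum>r<Q. \<alpha> q * \<alpha> r * k (X q) (X r))"
    for q by (rule sum_reindex_support[OF assms(1,2)]) (simp add: assms(3))
  have "(\<Sum>i<J. \<Sum>r<Q. \<alpha> (e i) * \<alpha> r * k (X (e i)) (X r)) = gram_form k Q \<alpha> X"
    unfolding gram_form_def by (rule sum_reindex_support[OF assms(1,2)]) (simp add: assms(3))
  then show ?thesis
    by (simp add: gram_form_def inner)
qed

lemma gram_form_divide: "gram_form k Q (\<lambda>q. \<alpha> q / c) X = gram_form k Q \<alpha> X / c\<^sup>2"
  unfolding gram_form_def by (simp add: sum_divide_distrib power2_eq_square)

lemma kdist2_dirac_origin:
  assumes "cnd_kernel h"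
  shows "kdist2 (kernel_k h) (\<lambda>f. dirac_int Q \<alpha> X f - f 0) = gram_form (kernel_k h) Q \<alpha> X"
  unfolding kdist2_def dirac_int_def gram_form_def
  by (simp add: kernel_k_zero_left[OF assms] kernel_k_zero_right[OF assms] sum_distrib_left mult_ac)

lemma obj_cong:
  assumes "\<And>q. q < Q \<Longrightarrow> \<alpha> q \<noteq> 0 \<Longrightarrow> X q = Y q"
  shows "obj h Q \<alpha> \<eta> X = obj h Q \<alpha> \<eta> Y"
proof -
  have "dirac_int Q \<alpha> X = dirac_int Q \<alpha> Y"
    unfolding dirac_int_def by (intro ext sum.cong refl) (metis assms lessThan_iff mult_zero_left)
  then show ?thesis
    unfolding obj_def by simp
qed

text \<open>Measure coercivity only speaks about strictly positive weights summing to one, so it is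
  applied to the normalised weights of the points with \<open>\<alpha>\<^sub>q > 0\<close>.\<close>
lemma gram_form_coercive:
  fixes h :: "'a::real_normed_vector \<Rightarrow> 'a \<Rightarrow> real"
  assumes h: "cnd_kernel h" and coercive: "measure_coercive h" and \<alpha>: "\<forall>q<Q. 0 \<le> \<alpha> q"
  obtains R where
    "\<And>X q. q < Q \<Longrightarrow> 0 < \<alpha> q \<Longrightarrow> R \<le> norm (X q) \<Longrightarrow> M \<le> sqrt (gram_form (kernel_k h) Q \<alpha> X)"
proof (cases "\<exists>q<Q. 0 < \<alpha> q")
  case False
  then show ?thesis
    using that by blast
next
  case True
  define S where "S = {q. q < Q \<and> 0 < \<alpha> q}"
  define s where "s = (\<Sum>q<Q. \<alpha> q)"
  have S: "finite S" "S \<noteq> {}" "S \<subseteq> {..<Q}"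
    using True by (auto simp: S_def)
  have outside_S: "\<alpha> q = 0" if "q < Q" "q \<notin> S" for q
    using that \<alpha> by (force simp: S_def)
  obtain q0 where "q0 < Q" "0 < \<alpha> q0"
    using True by blast
  moreover have "\<alpha> q0 \<le> s"
    unfolding s_def using \<alpha> \<open>q0 < Q\<close> by (intro member_le_sum) auto
  ultimately have s_pos: "0 < s"
    by simp
  obtain e where e: "bij_betw e {..<card S} S"
    using ex_bij_betw_nat_finite[OF S(1)] by (auto simp: lessThan_atLeast0)
  define \<beta> where "\<beta> = (\<lambda>j. \<alpha> (e j) / s)"
  have "1 \<le> card S"
    using S by (simp add: Suc_le_eq card_gt_0_iff)
  moreover have "\<forall>j<card S. 0 < \<beta> j"
    using bij_betwE[OF e] s_pos by (simp add: \<beta>_def S_def)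
  moreover have "(\<Sum>j<card S. \<alpha> (e j)) = s"
    unfolding s_def by (rule sum_reindex_support[OF e S(3)]) (simp add: outside_S)
  then have "(\<Sum>j<card S. \<beta> j) = 1"
    using s_pos by (simp add: \<beta>_def sum_divide_distrib[symmetric])
  ultimately obtain R where R: "\<And>Z. (\<exists>j<card S. R \<le> norm (Z j)) \<Longrightarrow>
      M / s \<le> sqrt (kdist2 (kernel_k h) (\<lambda>f. dirac_int (card S) \<beta> Z f - f 0))"
    using coercive unfolding measure_coercive_def by blast
  show ?thesis
  proof (rule that)
    fix X :: "nat \<Rightarrow> 'a" and q
    assume "q < Q" "0 < \<alpha> q" "R \<le> norm (X q)"
    moreover have "q \<in> e ` {..<card S}"
      using e \<open>q < Q\<close> \<open>0 < \<alpha> q\<close> by (simp add: S_def bij_betw_def)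
    ultimately have "M / s \<le> sqrt (gram_form (kernel_k h) (card S) \<beta> (\<lambda>j. X (e j)))"
      using R[of "\<lambda>j. X (e j)"] by (auto simp: kdist2_dirac_origin[OF h])
    also have "gram_form (kernel_k h) (card S) \<beta> (\<lambda>j. X (e j))
        = gram_form (kernel_k h) Q \<alpha> X / s\<^sup>2"
    proof -
      have "gram_form (kernel_k h) (card S) (\<lambda>j. \<alpha> (e j)) (\<lambda>j. X (e j))
          = gram_form (kernel_k h) Q \<alpha> X"
        by (rule gram_form_reindex_support[OF e S(3)]) (simp add: outside_S)
      then show ?thesis
        by (simp add: \<beta>_def gram_form_divide)
    qed
    finally show "M \<le> sqrt (gram_form (kernel_k h) Q \<alpha> X)"
      using s_pos by (simp add: real_sqrt_mult real_sqrt_divide divide_le_cancel)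
  qed
qed

locale kernel_integrable_measure =
  fixes h :: "'a::{metric_space, zero} \<Rightarrow> 'a \<Rightarrow> real" and M :: "'a measure"
  assumes cnd: "cnd_kernel h"
    and continuous: "continuous_on UNIV (\<lambda>(x, y). h x y)"
    and sets_M: "sets M = sets borel"
    and finite_moment: "(\<integral>\<^sup>+ x. ennreal (kernel_norm h x) \<partial>M) < \<infinity>"
begin

lemma borel_measurable_continuous: "continuous_on UNIV f \<Longrightarrow> f \<in> borel_measurable M"
  using borel_measurable_continuous_onI measurable_cong_sets[OF sets_M refl] by blast

lemma integrable_kernel_norm: "integrable M (kernel_norm h)"
proof (rule integrableI_bounded)
  show "kernel_norm h \<in> borel_measurable M"
    by (rule borel_measurable_continuous[OF continuous_on_kernel_norm[OF continuous]])
  show "(\<integral>\<^sup>+ x. ennreal (norm (kernel_norm h x)) \<partial>M) < \<infinity>"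
    using finite_moment by (simp add: kernel_norm_nonneg[OF cnd])
qed

lemma
  assumes "continuous_on UNIV f" and bound: "\<And>y. \<bar>f y\<bar> \<le> C * kernel_norm h y"
  shows integrable_kernel_bounded: "integrable M f"
    and integral_kernel_bounded_abs_le: "\<bar>integral\<^sup>L M f\<bar> \<le> C * integral\<^sup>L M (kernel_norm h)"
proof -
  have dominant: "integrable M (\<lambda>y. C * kernel_norm h y)"
    using integrable_kernel_norm by simp
  have "AE y in M. norm (f y) \<le> norm (C * kernel_norm h y)"
    by (intro AE_I2) (simp add: order_trans[OF bound abs_ge_self])
  then show integrable: "integrable M f"
    by (rule Bochner_Integration.integrable_bound[OF dominant borel_measurable_continuous[OF assms(1)]])
  have "\<bar>integral\<^sup>L M f\<bar> \<le> (\<integral>y. \<bar>f y\<bar> \<partial>M)"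
    using integral_norm_bound[of M f] by simp
  also have "\<dots> \<le> (\<integral>y. C * kernel_norm h y \<partial>M)"
    by (rule integral_mono) (use integrable dominant bound in auto)
  finally show "\<bar>integral\<^sup>L M f\<bar> \<le> C * integral\<^sup>L M (kernel_norm h)"
    by simp
qed

lemma continuous_kernel_k_right: "continuous_on UNIV (kernel_k h x)"
  by (rule continuous_on_kernel_k[OF continuous continuous_on_const continuous_on_id])

lemma integrable_kernel_k: "integrable M (kernel_k h x)"
  by (rule integrable_kernel_bounded[OF continuous_kernel_k_right kernel_k_abs_le[OF cnd]])

text \<open>Dominated convergence, with \<open>|k(u\<^sub>n, y)| \<le> K \<surd>k(y,y)\<close> for a bound \<open>K\<close> of the
  convergent sequence \<open>\<surd>k(u\<^sub>n, u\<^sub>n)\<close>.\<close>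
lemma continuous_integral_kernel_k: "continuous_on UNIV (\<lambda>x. \<integral>y. kernel_k h x y \<partial>M)"
proof (rule continuous_at_imp_continuous_on, intro ballI continuous_at_sequentiallyI)
  fix x :: 'a and u :: "nat \<Rightarrow> 'a"
  assume u: "u \<longlonglongrightarrow> x"
  have "(\<lambda>n. kernel_norm h (u n)) \<longlonglongrightarrow> kernel_norm h x"
    using continuous_on_kernel_norm[OF continuous] u
    by (intro isCont_tendsto_compose[OF _ u]) (simp add: continuous_on_eq_continuous_at)
  then have "Bseq (\<lambda>n. kernel_norm h (u n))"
    using convergent_imp_Bseq convergentI by blast
  then obtain K where K: "\<And>n. norm (kernel_norm h (u n)) \<le> K"
    unfolding Bseq_def by blast
  show "(\<lambda>n. \<integral>y. kernel_k h (u n) y \<partial>M) \<longlonglongrightarrow> (\<integral>y. kernel_k h x y \<partial>M)"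
  proof (rule integral_dominated_convergence[where w="\<lambda>y. K * kernel_norm h y"])
    show "integrable M (\<lambda>y. K * kernel_norm h y)"
      using integrable_kernel_norm by simp
    show "AE y in M. (\<lambda>n. kernel_k h (u n) y) \<longlonglongrightarrow> kernel_k h x y"
    proof (rule AE_I2)
      fix y
      have "isCont (\<lambda>x. kernel_k h x y) x"
        using continuous_on_kernel_k[OF continuous continuous_on_id continuous_on_const[of UNIV y]]
        by (simp add: continuous_on_eq_continuous_at)
      then show "(\<lambda>n. kernel_k h (u n) y) \<longlonglongrightarrow> kernel_k h x y"
        by (rule isCont_tendsto_compose[OF _ u])
    qed
    show "AE y in M. norm (kernel_k h (u n) y) \<le> K * kernel_norm h y" for n
    proof (rule AE_I2)
      fix y
      have "\<bar>kernel_k h (u n) y\<bar> \<le> kernel_norm h (u n) * kernel_norm h y"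
        by (rule kernel_k_abs_le[OF cnd])
      also have "\<dots> \<le> K * kernel_norm h y"
        using K[of n] by (intro mult_right_mono kernel_norm_nonneg[OF cnd]) simp
      finally show "norm (kernel_k h (u n) y) \<le> K * kernel_norm h y"
        by simp
    qed
  qed (rule borel_measurable_continuous[OF continuous_kernel_k_right])+
qed

end

lemma signed_int_diff:
  assumes "integrable (fst \<eta>) f" "integrable (snd \<eta>) f" "integrable (fst \<eta>) g" "integrable (snd \<eta>) g"
  shows "signed_int \<eta> (\<lambda>x. f x - g x) = signed_int \<eta> f - signed_int \<eta> g"
  unfolding signed_int_def using assms by simp

lemma signed_int_sum:
  assumes "\<And>i. i \<in> I \<Longrightarrow> integrable (fst \<eta>) (f i)" "\<And>i. i \<in> I \<Longrightarrow> integrable (snd \<eta>) (f i)"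
  shows "signed_int \<eta> (\<lambda>x. \<Sum>i\<in>I. f i x) = (\<Sum>i\<in>I. signed_int \<eta> (f i))"
  unfolding signed_int_def using assms by (simp add: sum_subtractf)

lemma signed_int_mult: "signed_int \<eta> (\<lambda>x. c * f x) = c * signed_int \<eta> f"
  unfolding signed_int_def by (simp add: right_diff_distrib)

locale kernel_signed_measure =
  P: kernel_integrable_measure h "fst \<eta>" + N: kernel_integrable_measure h "snd \<eta>"
  for h :: "'a::{metric_space, zero} \<Rightarrow> 'a \<Rightarrow> real" and \<eta>
begin

definition potential :: "'a \<Rightarrow> real" where
  "potential x = signed_int \<eta> (kernel_k h x)"

definition kernel_moment :: real where
  "kernel_moment = integral\<^sup>L (fst \<eta>) (kernel_norm h) + integral\<^sup>L (snd \<eta>) (kernel_norm h)"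

lemma signed_int_kernel_bounded_abs_le:
  assumes "continuous_on UNIV f" and "\<And>y. \<bar>f y\<bar> \<le> C * kernel_norm h y"
  shows "\<bar>signed_int \<eta> f\<bar> \<le> C * kernel_moment"
  using P.integral_kernel_bounded_abs_le[OF assms] N.integral_kernel_bounded_abs_le[OF assms]
  unfolding signed_int_def kernel_moment_def by (simp add: distrib_left)

lemma continuous_potential: "continuous_on UNIV potential"
  unfolding potential_def signed_int_def
  by (intro continuous_intros P.continuous_integral_kernel_k N.continuous_integral_kernel_k)

lemma potential_abs_le: "\<bar>potential x\<bar> \<le> kernel_moment * kernel_norm h x"
  using signed_int_kernel_bounded_abs_le[OF P.continuous_kernel_k_right kernel_k_abs_le[OF P.cnd]]
  by (simp add: potential_def mult.commute)

lemma potential_zero: "potential 0 = 0"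
proof -
  have "kernel_k h 0 = (\<lambda>_. 0)"
    by (intro ext kernel_k_zero_left[OF P.cnd])
  then show ?thesis
    by (simp add: potential_def signed_int_def)
qed

lemma signed_int_kernel_sum:
  "signed_int \<eta> (\<lambda>y. \<Sum>q<Q. \<alpha> q * kernel_k h (X q) y) = (\<Sum>q<Q. \<alpha> q * potential (X q))"
  by (simp add: signed_int_sum signed_int_mult potential_def P.integrable_kernel_k
      N.integrable_kernel_k)

lemma sum_potential_abs_le:
  "\<bar>\<Sum>q<Q. \<alpha> q * potential (X q)\<bar> \<le> sqrt (gram_form (kernel_k h) Q \<alpha> X) * kernel_moment"
  unfolding signed_int_kernel_sum[symmetric]
  by (intro signed_int_kernel_bounded_abs_le kernel_k_cauchy_schwarz P.cnd continuous_intros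
      P.continuous_kernel_k_right)

lemma obj_eq:
  "obj h Q \<alpha> \<eta> X = gram_form (kernel_k h) Q \<alpha> X - 2 * (\<Sum>q<Q. \<alpha> q * potential (X q))
    + signed_int \<eta> potential"
proof -
  define u where "u = (\<lambda>y. \<Sum>q<Q. \<alpha> q * kernel_k h y (X q))"
  have u_sym: "u = (\<lambda>y. \<Sum>q<Q. \<alpha> q * kernel_k h (X q) y)"
    unfolding u_def by (simp add: kernel_k_sym[OF P.cnd])
  have integrable: "integrable M u" "integrable M potential"
    if "M \<in> {fst \<eta>, snd \<eta>}" for M
    using that P.integrable_kernel_k N.integrable_kernel_k
      P.integrable_kernel_bounded[OF continuous_potential potential_abs_le]
      N.integrable_kernel_bounded[OF continuous_potential potential_abs_le]
    by (auto simp: u_sym)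
  have "obj h Q \<alpha> \<eta> X = dirac_int Q \<alpha> X (\<lambda>x. u x - potential x)
      - signed_int \<eta> (\<lambda>x. u x - potential x)"
    by (simp add: obj_def kdist2_def dirac_int_def u_def potential_def)
  also have "dirac_int Q \<alpha> X (\<lambda>x. u x - potential x)
      = gram_form (kernel_k h) Q \<alpha> X - (\<Sum>q<Q. \<alpha> q * potential (X q))"
    by (simp add: dirac_int_def u_def gram_form_def right_diff_distrib sum_subtractf
        sum_distrib_left mult.assoc)
  also have "signed_int \<eta> (\<lambda>x. u x - potential x)
      = (\<Sum>q<Q. \<alpha> q * potential (X q)) - signed_int \<eta> potential"
    using integrable by (simp add: signed_int_diff u_sym signed_int_kernel_sum)
  finally show ?thesis
    by simp
qed

lemma continuous_obj: "continuous_on UNIV (obj h Q \<alpha> \<eta>)"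
proof -
  have "continuous_on UNIV (\<lambda>X. kernel_k h (X q) (X r))" for q r
    by (rule continuous_on_kernel_k[OF P.continuous continuous_on_product_coordinates
          continuous_on_product_coordinates])
  moreover have "continuous_on UNIV (\<lambda>X. potential (X q))" for q
    by (rule continuous_on_compose2[OF continuous_potential continuous_on_product_coordinates]) simp
  ultimately show ?thesis
    unfolding obj_eq[abs_def] gram_form_def by (intro continuous_intros)
qed

lemma obj_zero: "obj h Q \<alpha> \<eta> (\<lambda>_. 0) = signed_int \<eta> potential"
  by (simp add: obj_eq gram_form_def potential_zero kernel_k_zero_left[OF P.cnd])

lemma obj_zero_le_if_gram_form_large:
  assumes "2 * kernel_moment \<le> sqrt (gram_form (kernel_k h) Q \<alpha> X)"
  shows "obj h Q \<alpha> \<eta> (\<lambda>_. 0) \<le> obj h Q \<alpha> \<eta> X"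
proof -
  let ?A = "gram_form (kernel_k h) Q \<alpha> X"
  have "0 \<le> ?A"
    by (rule gram_form_kernel_k_nonneg[OF P.cnd])
  then have "2 * (sqrt ?A * kernel_moment) \<le> ?A"
    using assms mult_left_mono[of "2 * kernel_moment" "sqrt ?A" "sqrt ?A"] by (simp add: mult_ac)
  moreover have "(\<Sum>q<Q. \<alpha> q * potential (X q)) \<le> sqrt ?A * kernel_moment"
    using sum_potential_abs_le by (rule abs_le_D1)
  ultimately show ?thesis
    unfolding obj_zero obj_eq[where X=X] by linarith
qed

end

lemma continuous_attains_inf_if_coercive_on_coordinates:
  fixes f :: "(nat \<Rightarrow> 'a::{heine_borel, real_normed_vector}) \<Rightarrow> real"
  assumes continuous: "continuous_on UNIV f"
    and local: "\<And>X Y. (\<And>q. q \<in> S \<Longrightarrow> X q = Y q) \<Longrightarrow> f X = f Y"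
    and coercive: "\<And>X q. q \<in> S \<Longrightarrow> R \<le> norm (X q) \<Longrightarrow> f (\<lambda>_. 0) \<le> f X"
  shows "\<exists>X. \<forall>Y. f X \<le> f Y"
proof -
  define K where "K = PiE UNIV (\<lambda>q. if q \<in> S then cball 0 \<bar>R\<bar> else {0::'a})"
  have "compactin (product_topology (\<lambda>_. euclidean) UNIV) K"
    unfolding K_def compactin_PiE by (auto simp: compact_cball)
  then have "compact K"
    by (simp add: euclidean_product_topology)
  moreover have zero_K: "(\<lambda>_. 0) \<in> K"
    unfolding K_def by (rule PiE_I) simp_all
  ultimately have "\<exists>X\<in>K. \<forall>Y\<in>K. f X \<le> f Y"
    by (intro continuous_attains_inf continuous_on_subset[OF continuous]) auto
  then obtain X where X_min: "\<And>Y. Y \<in> K \<Longrightarrow> f X \<le> f Y"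
    by blast
  have "f X \<le> f Y" for Y
  proof (cases "\<exists>q\<in>S. R \<le> norm (Y q)")
    case True
    then obtain q where "q \<in> S" "R \<le> norm (Y q)"
      by blast
    then have "f (\<lambda>_. 0) \<le> f Y"
      by (rule coercive)
    with X_min[OF zero_K] show ?thesis
      by simp
  next
    case False
    define Y' where "Y' q = (if q \<in> S then Y q else 0)" for q
    have "Y' \<in> K"
      unfolding K_def using False by (intro PiE_I) (auto simp: Y'_def)
    moreover have "f Y' = f Y"
      by (rule local) (simp add: Y'_def)
    ultimately show ?thesis
      using X_min by fastforce
  qed
  then show ?thesis
    by blast
qed

theorem proposition1:
  fixes h :: "real^'n \<Rightarrow> real^'n \<Rightarrow> real"
    and Q :: nat and \<alpha> :: "nat \<Rightarrow> real"
    and \<eta> :: "(real^'n) measure \<times> (real^'n) measure"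
  assumes "Q \<ge> 1"
    and "cnd_kernel h"
    and "\<forall>q<Q. \<alpha> q \<ge> 0"
    and "finite_signed_borel \<eta>"
    and "in_MA h \<eta>"
    and "continuous_on UNIV (\<lambda>(x, y). h x y)"
    and "measure_coercive h"
  shows "\<exists>X::nat \<Rightarrow> real^'n. \<forall>Y::nat \<Rightarrow> real^'n. obj h Q \<alpha> \<eta> X \<le> obj h Q \<alpha> \<eta> Y"
proof -
  interpret kernel_signed_measure h \<eta>
    using assms(2,4,5,6)
    by unfold_locales (auto simp: finite_signed_borel_def in_MA_def kernel_norm_def)
  obtain R where R: "\<And>X q. q < Q \<Longrightarrow> 0 < \<alpha> q \<Longrightarrow> R \<le> norm (X q) \<Longrightarrow>
      2 * kernel_moment \<le> sqrt (gram_form (kernel_k h) Q \<alpha> X)"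
    using gram_form_coercive[OF assms(2,7,3)] by blast
  then have "obj h Q \<alpha> \<eta> (\<lambda>_. 0) \<le> obj h Q \<alpha> \<eta> X"
    if "q \<in> {q. q < Q \<and> 0 < \<alpha> q}" "R \<le> norm (X q)" for X q
    using that by (intro obj_zero_le_if_gram_form_large) blast
  moreover have "obj h Q \<alpha> \<eta> X = obj h Q \<alpha> \<eta> Y"
    if "\<And>q. q \<in> {q. q < Q \<and> 0 < \<alpha> q} \<Longrightarrow> X q = Y q" for X Y
    using that assms(3) by (intro obj_cong) force
  ultimately show ?thesis
    by (intro continuous_attains_inf_if_coercive_on_coordinates[OF continuous_obj]) blast+
qed

end
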